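(* Let $G$ be a nonabelian group, let $\psi\in\operatorname{End}(G)$ satisfy $\psi([G,G])\le Z(G)$, and let $\alpha,\beta\in\mathscr{E}$. Write $\psi_\alpha=\psi\circ\alpha:G\to G$. Then for all $g,h\in G$: (1) $\psi_\alpha(1_G)=1_G$; (2) $\psi_{\alpha+\beta}(g)\equiv\psi_{\beta+\alpha}(g)\pmod{Z(G)}$; (3) $\psi_\alpha(gh)\equiv\psi_\alpha(g)\psi_\alpha(h)\pmod{Z(G)}$; (4) $\psi_\alpha(g)^{-1}\equiv\psi_\alpha(g^{-1})\pmod{Z(G)}$; (5) $\psi_\alpha(gh)\psi_\alpha(g)^{-1}\equiv\psi_\alpha(h)\pmod{Z(G)}$.
   Context: $Z(G)$ is the center and $[G,G]$ the commutator subgroup of $G$. For $x,y\in G$, $x\equiv y\pmod{Z(G)}$ means $x=yz$ for some $z\in Z(G)$. $\mathscr{E}$ denotes the set of formal expressions $\alpha=n_1\phi_1+\cdots+n_t\phi_t$ with $t\ge 0$, $n_i\in\mathbb Z$, $\phi_i\in\operatorname{End}(G)$ (the free group generated by $\operatorname{End}(G)$, written additively, with sum $\alpha+\beta$ given by concatenation), acting on $G$ by $\alpha(g)=\phi_1(g^{n_1})\phi_2(g^{n_2})\cdots\phi_t(g^{n_t})$. (The order of terms matters, so $\alpha+\beta$ and $\beta+\alpha$ may act differently.) *)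

theory Defs
  imports "HOL-Algebra.Algebra"
begin

definition group_center :: "('a, 'b) monoid_scheme \<Rightarrow> 'a set" where
  "group_center G = {z \<in> carrier G. \<forall>x \<in> carrier G. z \<otimes>\<^bsub>G\<^esub> x = x \<otimes>\<^bsub>G\<^esub> z}"

definition cong_center :: "('a, 'b) monoid_scheme \<Rightarrow> 'a \<Rightarrow> 'a \<Rightarrow> bool" where
  "cong_center G x y \<longleftrightarrow> (\<exists>z \<in> group_center G. x = y \<otimes>\<^bsub>G\<^esub> z)"

text \<open>Formal expressions n_1 phi_1 + ... + n_t phi_t, represented as lists of
  pairs (n_i, phi_i) with each phi_i an endomorphism; the sum is list append.\<close>
definition formal_exprs :: "('a, 'b) monoid_scheme \<Rightarrow> (int \<times> ('a \<Rightarrow> 'a)) list set" where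
  "formal_exprs G = {\<alpha>. \<forall>p \<in> set \<alpha>. snd p \<in> hom G G}"

definition expr_act :: "('a, 'b) monoid_scheme \<Rightarrow> (int \<times> ('a \<Rightarrow> 'a)) list \<Rightarrow> 'a \<Rightarrow> 'a" where
  "expr_act G \<alpha> g = foldr (\<lambda>(n, \<phi>) acc. \<phi> (g [^]\<^bsub>G\<^esub> n) \<otimes>\<^bsub>G\<^esub> acc) \<alpha> \<one>\<^bsub>G\<^esub>"

end

theory Submission
  imports Defs
begin

text \<open>Composed with the projection onto the abelian group \<open>G/[G,G]\<close>, every \<open>\<alpha> \<in> \<E>\<close> becomes
  a homomorphism, and \<open>\<alpha> + \<beta>\<close>, \<open>\<beta> + \<alpha>\<close> agree there. So in each congruence the two elements
  to which \<open>\<psi>\<close> is applied satisfy \<open>x = c y\<close> with \<open>c \<in> [G,G]\<close>, and since \<open>\<psi> c\<close> is central,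
  \<open>\<psi> x \<equiv> \<psi> y\<close> modulo \<open>Z(G)\<close>.\<close>

lemma formal_exprs_Cons [simp]:
  "(n, \<phi>) # \<alpha> \<in> formal_exprs G \<longleftrightarrow> \<phi> \<in> hom G G \<and> \<alpha> \<in> formal_exprs G"
  by (simp add: formal_exprs_def)

lemma formal_exprs_append [simp]:
  "\<alpha> @ \<beta> \<in> formal_exprs G \<longleftrightarrow> \<alpha> \<in> formal_exprs G \<and> \<beta> \<in> formal_exprs G"
  by (auto simp add: formal_exprs_def)

lemma expr_act_Nil [simp]: "expr_act G [] g = \<one>\<^bsub>G\<^esub>"
  by (simp add: expr_act_def)

lemma expr_act_Cons [simp]:
  "expr_act G ((n, \<phi>) # \<alpha>) g = \<phi> (g [^]\<^bsub>G\<^esub> n) \<otimes>\<^bsub>G\<^esub> expr_act G \<alpha> g"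
  by (simp add: expr_act_def)

context group
begin

lemma expr_act_closed [simp]:
  "\<alpha> \<in> formal_exprs G \<Longrightarrow> g \<in> carrier G \<Longrightarrow> expr_act G \<alpha> g \<in> carrier G"
  by (induction \<alpha>) (auto simp: hom_def Pi_def)

lemma expr_act_append:
  assumes "\<alpha> \<in> formal_exprs G" "\<beta> \<in> formal_exprs G" "g \<in> carrier G"
  shows "expr_act G (\<alpha> @ \<beta>) g = expr_act G \<alpha> g \<otimes> expr_act G \<beta> g"
  using assms by (induction \<alpha>) (auto simp: hom_def Pi_def m_assoc)

lemma expr_act_one [simp]:
  "\<alpha> \<in> formal_exprs G \<Longrightarrow> expr_act G \<alpha> \<one> = \<one>"
  by (induction \<alpha>) (auto simp: hom_one is_group)

end

lemma (in comm_group) hom_compose_int_pow: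
  assumes "group H" "f \<in> hom H G"
  shows "(\<lambda>x. f (x [^]\<^bsub>H\<^esub> (n :: int))) \<in> hom H G"
proof (rule group.hom_eq[OF assms(1)])
  show "(\<lambda>x. f x [^] n) \<in> hom H G"
    using assms(2) by (auto simp: hom_def Pi_def int_pow_distrib)
  show "f (x [^]\<^bsub>H\<^esub> n) = f x [^] n" if "x \<in> carrier H" for x
    using hom_int_pow[OF assms(2) that assms(1) is_group] .
qed

lemma (in comm_group) hom_compose_expr_act:
  assumes "group H" "f \<in> hom H G" "\<alpha> \<in> formal_exprs H"
  shows "(\<lambda>g. f (expr_act H \<alpha> g)) \<in> hom H G"
  using assms(3)
proof (induction \<alpha>)
  case Nil
  show ?case
    using hom_one[OF assms(2) assms(1) is_group] trivial_hom[OF is_group] by simp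
next
  case (Cons p \<alpha>)
  obtain n \<phi> where p: "p = (n, \<phi>)" by fastforce
  with Cons have \<phi>: "\<phi> \<in> hom H H" and \<alpha>: "\<alpha> \<in> formal_exprs H" by auto
  then have "(\<lambda>g. f (\<phi> g)) \<in> hom H G"
    using assms(2) by (auto simp: hom_def Pi_def)
  then have "(\<lambda>g. f (\<phi> (g [^]\<^bsub>H\<^esub> n)) \<otimes> f (expr_act H \<alpha> g)) \<in> hom H G"
    using Cons.IH \<alpha> assms(1) by (intro hom_group_mult hom_compose_int_pow)
  then show ?case
  proof (rule group.hom_eq[OF assms(1)])
    show "f (expr_act H (p # \<alpha>) g) = f (\<phi> (g [^]\<^bsub>H\<^esub> n)) \<otimes> f (expr_act H \<alpha> g)"
      if "g \<in> carrier H" for g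
      using that p \<phi> \<alpha> assms(1,2)
      by (simp add: hom_mult group.int_pow_closed group.expr_act_closed hom_in_carrier)
  qed
qed

context group
begin

abbreviation abelianization :: "'a set monoid"
  where "abelianization \<equiv> G Mod derived G (carrier G)"

abbreviation abelianize :: "'a \<Rightarrow> 'a set"
  where "abelianize x \<equiv> derived G (carrier G) #> x"

lemma comm_group_abelianization: "comm_group abelianization"
  by (rule derived_quot_is_comm_group)

lemma group_hom_abelianize: "group_hom G abelianization abelianize"
  using normal.r_coset_hom_Mod[OF derived_self_is_normal]
    comm_group_abelianization
  by (simp add: group_hom_def group_hom_axioms_def is_group comm_group_def)

lemma group_hom_abelianize_expr_act:
  assumes "\<alpha> \<in> formal_exprs G"
  shows "group_hom G abelianization (\<lambda>g. abelianize (expr_act G \<alpha> g))"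
  using comm_group.hom_compose_expr_act[OF comm_group_abelianization is_group
      group_hom.homh[OF group_hom_abelianize] assms]
    group_hom_abelianize
  by (simp add: group_hom_def group_hom_axioms_def)

end

locale derived_central_endo = group G for G (structure) +
  fixes \<psi> :: "'a \<Rightarrow> 'a"
  assumes hom_psi: "\<psi> \<in> hom G G"
    and psi_derived_central: "\<psi> ` derived G (carrier G) \<subseteq> group_center G"
begin

sublocale psi: group_hom G G \<psi>
  using hom_psi by (simp add: group_hom_def group_hom_axioms_def is_group)

sublocale Gab: comm_group abelianization
  by (rule comm_group_abelianization)

sublocale ab: group_hom G abelianization abelianize
  by (rule group_hom_abelianize)

lemma cong_center_psi_if_abelianize_eq:
  assumes "x \<in> carrier G" "y \<in> carrier G" "abelianize x = abelianize y"
  shows "cong_center G (\<psi> x) (\<psi> y)"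
proof -
  have "x \<in> derived G (carrier G) #> y"
    using assms repr_independenceD[OF derived_is_subgroup] by (metis subset_refl)
  then obtain c where c: "c \<in> derived G (carrier G)" "x = c \<otimes> y"
    unfolding r_coset_def by blast
  have "c \<in> carrier G"
    using c(1) derived_incl[OF subset_refl subgroup_self] by blast
  moreover have central: "\<psi> c \<in> group_center G"
    using c(1) psi_derived_central by blast
  ultimately have "\<psi> x = \<psi> y \<otimes> \<psi> c"
    using c(2) assms(2) by (simp add: group_center_def)
  with central show ?thesis
    unfolding cong_center_def by blast
qed

lemma cong_center_psi_expr_act_append_swap:
  assumes "\<alpha> \<in> formal_exprs G" "\<beta> \<in> formal_exprs G" "g \<in> carrier G"
  shows "cong_center G (\<psi> (expr_act G (\<alpha> @ \<beta>) g)) (\<psi> (expr_act G (\<beta> @ \<alpha>) g))"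
proof (rule cong_center_psi_if_abelianize_eq)
  show "abelianize (expr_act G (\<alpha> @ \<beta>) g) = abelianize (expr_act G (\<beta> @ \<alpha>) g)"
    using assms by (simp add: expr_act_append ab.hom_mult Gab.m_comm del: mult_FactGroup)
qed (use assms in auto)

context
  fixes \<alpha> assumes \<alpha>: "\<alpha> \<in> formal_exprs G"
begin

interpretation act: group_hom G abelianization "\<lambda>g. abelianize (expr_act G \<alpha> g)"
  using \<alpha> by (rule group_hom_abelianize_expr_act)

lemma cong_center_psi_expr_act_mult:
  assumes "g \<in> carrier G" "h \<in> carrier G"
  shows "cong_center G (\<psi> (expr_act G \<alpha> (g \<otimes> h))) (\<psi> (expr_act G \<alpha> g) \<otimes> \<psi> (expr_act G \<alpha> h))"
proof -
  have "abelianize (expr_act G \<alpha> (g \<otimes> h)) = abelianize (expr_act G \<alpha> g \<otimes> expr_act G \<alpha> h)"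
    using assms \<alpha> act.hom_mult by (simp add: ab.hom_mult del: mult_FactGroup)
  then have "cong_center G (\<psi> (expr_act G \<alpha> (g \<otimes> h))) (\<psi> (expr_act G \<alpha> g \<otimes> expr_act G \<alpha> h))"
    using assms \<alpha> by (intro cong_center_psi_if_abelianize_eq) auto
  then show ?thesis
    using assms \<alpha> by simp
qed

lemma cong_center_inv_psi_expr_act:
  assumes "g \<in> carrier G"
  shows "cong_center G (inv (\<psi> (expr_act G \<alpha> g))) (\<psi> (expr_act G \<alpha> (inv g)))"
proof -
  have "abelianize (inv (expr_act G \<alpha> g)) = abelianize (expr_act G \<alpha> (inv g))"
    using assms \<alpha> act.hom_inv by (simp add: ab.hom_inv)
  then have "cong_center G (\<psi> (inv (expr_act G \<alpha> g))) (\<psi> (expr_act G \<alpha> (inv g)))"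
    using assms \<alpha> by (intro cong_center_psi_if_abelianize_eq) auto
  then show ?thesis
    using assms \<alpha> by simp
qed

lemma cong_center_psi_expr_act_mult_inv:
  assumes "g \<in> carrier G" "h \<in> carrier G"
  shows "cong_center G (\<psi> (expr_act G \<alpha> (g \<otimes> h)) \<otimes> inv (\<psi> (expr_act G \<alpha> g))) (\<psi> (expr_act G \<alpha> h))"
proof -
  let ?A = "\<lambda>g. abelianize (expr_act G \<alpha> g)"
  have "abelianize (expr_act G \<alpha> (g \<otimes> h) \<otimes> inv (expr_act G \<alpha> g))
      = ?A g \<otimes>\<^bsub>abelianization\<^esub> ?A h \<otimes>\<^bsub>abelianization\<^esub> inv\<^bsub>abelianization\<^esub> ?A g"
    using assms \<alpha> act.hom_mult by (simp add: ab.hom_mult ab.hom_inv del: mult_FactGroup)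
  also have "\<dots> = ?A h"
    using act.hom_closed[OF assms(1)] act.hom_closed[OF assms(2)]
    by (metis Gab.m_assoc Gab.m_comm Gab.inv_closed Gab.r_inv Gab.r_one)
  finally have "cong_center G (\<psi> (expr_act G \<alpha> (g \<otimes> h) \<otimes> inv (expr_act G \<alpha> g))) (\<psi> (expr_act G \<alpha> h))"
    using assms \<alpha> by (intro cong_center_psi_if_abelianize_eq) auto
  then show ?thesis
    using assms \<alpha> by simp
qed

end

end

theorem lemma3p1:
  fixes G :: "('a, 'b) monoid_scheme" and \<psi> :: "'a \<Rightarrow> 'a"
    and \<alpha> \<beta> :: "(int \<times> ('a \<Rightarrow> 'a)) list"
  assumes "group G" and "\<not> comm_group G"
    and "\<psi> \<in> hom G G"
    and "\<psi> ` derived G (carrier G) \<subseteq> group_center G"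
    and "\<alpha> \<in> formal_exprs G" and "\<beta> \<in> formal_exprs G"
  shows "\<psi> (expr_act G \<alpha> \<one>\<^bsub>G\<^esub>) = \<one>\<^bsub>G\<^esub>
    \<and> (\<forall>g \<in> carrier G.
           cong_center G (\<psi> (expr_act G (\<alpha> @ \<beta>) g)) (\<psi> (expr_act G (\<beta> @ \<alpha>) g)))
    \<and> (\<forall>g \<in> carrier G. \<forall>h \<in> carrier G.
           cong_center G (\<psi> (expr_act G \<alpha> (g \<otimes>\<^bsub>G\<^esub> h)))
             (\<psi> (expr_act G \<alpha> g) \<otimes>\<^bsub>G\<^esub> \<psi> (expr_act G \<alpha> h)))
    \<and> (\<forall>g \<in> carrier G.
           cong_center G (inv\<^bsub>G\<^esub> (\<psi> (expr_act G \<alpha> g))) (\<psi> (expr_act G \<alpha> (inv\<^bsub>G\<^esub> g))))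
    \<and> (\<forall>g \<in> carrier G. \<forall>h \<in> carrier G.
           cong_center G (\<psi> (expr_act G \<alpha> (g \<otimes>\<^bsub>G\<^esub> h)) \<otimes>\<^bsub>G\<^esub> inv\<^bsub>G\<^esub> (\<psi> (expr_act G \<alpha> g)))
             (\<psi> (expr_act G \<alpha> h)))"
proof -
  interpret derived_central_endo G \<psi>
    using assms(1,3,4) by (simp add: derived_central_endo_def derived_central_endo_axioms_def)
  show ?thesis
    using assms(5,6)
    by (auto intro: cong_center_psi_expr_act_append_swap cong_center_psi_expr_act_mult
        cong_center_inv_psi_expr_act cong_center_psi_expr_act_mult_inv)
qed

end
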